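(* Let $n\geq 4$ and let $\delta: VT_n\to\mathrm{GL}_{n+1}(\mathbb{C})$ be a homogeneous $3$-local representation of the virtual twin group $VT_n$. Then $\delta$ is reducible.
   Context: The virtual twin group $VT_n$ ($n\geq 2$) has generators $s_1,\dots,s_{n-1},\rho_1,\dots,\rho_{n-1}$ and defining relations: $s_i^2=1$ ($1\le i\le n-1$); $s_is_j=s_js_i$ ($|i-j|\ge2$); $\rho_i\rho_{i+1}\rho_i=\rho_{i+1}\rho_i\rho_{i+1}$ ($1\le i\le n-2$); $\rho_i\rho_j=\rho_j\rho_i$ ($|i-j|\ge2$); $\rho_i^2=1$; $s_i\rho_j=\rho_js_i$ ($|i-j|\ge2$); $\rho_i\rho_{i+1}s_i=s_{i+1}\rho_i\rho_{i+1}$ ($1\le i\le n-2$). A representation $\delta:VT_n\to\mathrm{GL}_{n+1}(\mathbb{C})$ is homogeneous $3$-local if there are fixed $M,N\in\mathrm{GL}_3(\mathbb{C})$ with $\delta(s_i)=\mathrm{diag}(I_{i-1},M,I_{n-i-1})$ and $\delta(\rho_i)=\mathrm{diag}(I_{i-1},N,I_{n-i-1})$ for all $1\le i\le n-1$ (block-diagonal, $I_r$ the $r\times r$ identity). Reducible means there is a subspace $0\neq U\neq\mathbb{C}^{n+1}$ invariant under all $\delta(g)$. *)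

theory Defs
  imports "Jordan_Normal_Form.Matrix"
begin

text \<open>The block matrix diag(I_{i-1}, A, I_{n-i-1}) of size (n+1) x (n+1),
  for 1 <= i <= n-1 and a 3x3 matrix A; rows/columns are 0-based, so the
  block A occupies rows and columns i-1, i, i+1.\<close>
definition local_mat :: "nat \<Rightarrow> nat \<Rightarrow> complex mat \<Rightarrow> complex mat" where
  "local_mat n i A = mat (n+1) (n+1) (\<lambda>(r,c).
     if i - 1 \<le> r \<and> r \<le> i + 1 \<and> i - 1 \<le> c \<and> c \<le> i + 1
     then A $$ (r - (i - 1), c - (i - 1))
     else if r = c then 1 else 0)"

text \<open>delta(s_i) = local_mat n i M, delta(rho_i) = local_mat n i N, with M, N in GL_3(C).
  Such an assignment on generators defines a homomorphism on VT_n iff the images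
  satisfy all defining relations of VT_n.\<close>
definition homog_3local_rep :: "nat \<Rightarrow> complex mat \<Rightarrow> complex mat \<Rightarrow> bool" where
  "homog_3local_rep n M N \<longleftrightarrow>
     M \<in> carrier_mat 3 3 \<and> N \<in> carrier_mat 3 3 \<and> invertible_mat M \<and> invertible_mat N \<and>
     (let S = (\<lambda>i. local_mat n i M); R = (\<lambda>i. local_mat n i N); I = 1\<^sub>m (n+1) in
       (\<forall>i\<in>{1..n-1}. S i * S i = I) \<and>
       (\<forall>i\<in>{1..n-1}. \<forall>j\<in>{1..n-1}. (i + 2 \<le> j \<or> j + 2 \<le> i) \<longrightarrow> S i * S j = S j * S i) \<and>
       (\<forall>i\<in>{1..n-2}. R i * R (i+1) * R i = R (i+1) * R i * R (i+1)) \<and>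
       (\<forall>i\<in>{1..n-1}. \<forall>j\<in>{1..n-1}. (i + 2 \<le> j \<or> j + 2 \<le> i) \<longrightarrow> R i * R j = R j * R i) \<and>
       (\<forall>i\<in>{1..n-1}. R i * R i = I) \<and>
       (\<forall>i\<in>{1..n-1}. \<forall>j\<in>{1..n-1}. (i + 2 \<le> j \<or> j + 2 \<le> i) \<longrightarrow> S i * R j = R j * S i) \<and>
       (\<forall>i\<in>{1..n-2}. R i * R (i+1) * S i = S (i+1) * R i * R (i+1)))"

text \<open>The image delta(VT_n): all products of generator images. Since every
  generator of VT_n is an involution, this is the full image of the group.\<close>
inductive_set rep_image :: "nat \<Rightarrow> complex mat \<Rightarrow> complex mat \<Rightarrow> complex mat set"
  for n M N where
  one: "1\<^sub>m (n+1) \<in> rep_image n M N"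
| gen_s: "A \<in> rep_image n M N \<Longrightarrow> 1 \<le> i \<Longrightarrow> i \<le> n - 1 \<Longrightarrow> A * local_mat n i M \<in> rep_image n M N"
| gen_rho: "A \<in> rep_image n M N \<Longrightarrow> 1 \<le> i \<Longrightarrow> i \<le> n - 1 \<Longrightarrow> A * local_mat n i N \<in> rep_image n M N"

definition is_subspace :: "nat \<Rightarrow> complex vec set \<Rightarrow> bool" where
  "is_subspace d U \<longleftrightarrow> U \<subseteq> carrier_vec d \<and> 0\<^sub>v d \<in> U \<and>
     (\<forall>u\<in>U. \<forall>v\<in>U. u + v \<in> U) \<and> (\<forall>a. \<forall>u\<in>U. a \<cdot>\<^sub>v u \<in> U)"

definition reducible_rep :: "nat \<Rightarrow> complex mat \<Rightarrow> complex mat \<Rightarrow> bool" where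
  "reducible_rep n M N \<longleftrightarrow> (\<exists>U. is_subspace (n+1) U \<and> U \<noteq> {0\<^sub>v (n+1)} \<and> U \<noteq> carrier_vec (n+1) \<and>
     (\<forall>A\<in>rep_image n M N. \<forall>u\<in>U. A *\<^sub>v u \<in> U))"

end

theory Submission
  imports Defs
begin

text \<open>Since n \<ge> 4, the generators s1, s3, rho1, rho3 exist and commute pairwise, and
  the 3x3 blocks at positions 1 and 3 overlap in the single coordinate 2. Comparing entries
  of the commuting products gives A(a,2) B(0,b) = 0 for all A, B \<in> {M, N}, a \<in> {0,1} and
  b \<in> {1,2}. So either the last columns of M and N vanish above the diagonal, and then the
  last standard basis vector spans an invariant line, or the first rows of M and N vanish off
  the diagonal, and then the hyperplane x(0) = 0 is invariant.\<close>

lemma sum_eq_single: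
  fixes f :: "nat \<Rightarrow> 'a::comm_monoid_add"
  assumes "k < m" and "\<And>j. j < m \<Longrightarrow> j \<noteq> k \<Longrightarrow> f j = 0"
  shows "sum f {0..<m} = f k"
  using sum.mono_neutral_left[of "{0..<m}" "{k}" f] assms by auto

lemma local_mat_carrier [simp]: "local_mat n i A \<in> carrier_mat (n+1) (n+1)"
  and dim_local_mat [simp]: "dim_row (local_mat n i A) = n+1" "dim_col (local_mat n i A) = n+1"
  by (simp_all add: local_mat_def)

lemma index_local_mat:
  "r < n+1 \<Longrightarrow> c < n+1 \<Longrightarrow> local_mat n i A $$ (r,c) =
     (if i - 1 \<le> r \<and> r \<le> i + 1 \<and> i - 1 \<le> c \<and> c \<le> i + 1
     then A $$ (r - (i - 1), c - (i - 1))
     else if r = c then 1 else 0)"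
  by (simp add: local_mat_def)

lemma index_mult_local_mat:
  "r < n+1 \<Longrightarrow> c < n+1 \<Longrightarrow> (local_mat n i A * local_mat n j B) $$ (r,c) =
     (\<Sum>k\<in>{0..<n+1}. local_mat n i A $$ (r,k) * local_mat n j B $$ (k,c))"
  by (simp add: scalar_prod_def del: upt_Suc)

text \<open>The blocks at i and i + 2 share only the coordinate i + 1; entry (i - 1 + a, i + 1 + b) of
  the product in one order passes through it, in the other order it is zero.\<close>
lemma commuting_local_mats_overlap:
  assumes i: "1 \<le> i" "i + 2 \<le> n - 1" and a: "a \<le> 1" and b: "1 \<le> b" "b \<le> 2"
    and comm: "local_mat n i A * local_mat n (i+2) B = local_mat n (i+2) B * local_mat n i A"
  shows "A $$ (a,2) * B $$ (0,b) = 0"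
proof -
  have r: "i - 1 + a < n+1" and c: "i + 1 + b < n+1" using i a b by auto
  have "(local_mat n i A * local_mat n (i+2) B) $$ (i - 1 + a, i + 1 + b)
      = local_mat n i A $$ (i - 1 + a, i + 1) * local_mat n (i+2) B $$ (i + 1, i + 1 + b)"
    unfolding index_mult_local_mat[OF r c]
    by (rule sum_eq_single) (use i a b in \<open>auto simp: index_local_mat\<close>)
  also have "\<dots> = A $$ (a,2) * B $$ (0,b)"
    using i a b by (auto simp: index_local_mat)
  finally have "(local_mat n i A * local_mat n (i+2) B) $$ (i - 1 + a, i + 1 + b)
      = A $$ (a,2) * B $$ (0,b)" .
  moreover have "(local_mat n (i+2) B * local_mat n i A) $$ (i - 1 + a, i + 1 + b) = 0"
    unfolding index_mult_local_mat[OF r c]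
    by (rule sum.neutral) (use i a b in \<open>auto simp: index_local_mat\<close>)
  ultimately show ?thesis using comm by simp
qed

lemma local_mat_last_col_zero:
  assumes i: "1 \<le> i" "i \<le> n - 1" and r: "r < n"
    and X: "X $$ (0,2) = 0" "X $$ (1,2) = 0"
  shows "local_mat n i X $$ (r,n) = 0"
proof (cases "i = n - 1 \<and> n - 2 \<le> r")
  case True
  then have "r - (i - 1) \<in> {0,1}" and "n - (i - 1) = 2" using i r by auto
  then show ?thesis using True r X by (auto simp: index_local_mat)
qed (use i r in \<open>auto simp: index_local_mat\<close>)

lemma local_mat_first_row_zero:
  assumes c: "0 < c" "c < n+1" and X: "X $$ (0,1) = 0" "X $$ (0,2) = 0"
  shows "local_mat n i X $$ (0,c) = 0"
proof (cases "i \<le> 1 \<and> c \<le> 2")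
  case True
  then have "c - (i - 1) \<in> {1,2}" using c by auto
  then show ?thesis using True c X by (auto simp: index_local_mat)
qed (use c in \<open>auto simp: index_local_mat\<close>)

definition zero_coords_subspace :: "nat \<Rightarrow> nat set \<Rightarrow> complex vec set" where
  "zero_coords_subspace d K = {v \<in> carrier_vec d. \<forall>k<d. k \<in> K \<longrightarrow> v $ k = 0}"

lemma is_subspace_zero_coords_subspace: "is_subspace d (zero_coords_subspace d K)"
  unfolding is_subspace_def zero_coords_subspace_def by auto

lemma zero_coords_subspace_nonzero:
  assumes "j < d" "j \<notin> K"
  shows "zero_coords_subspace d K \<noteq> {0\<^sub>v d}"
proof -
  have "unit_vec d j \<in> zero_coords_subspace d K"
    using assms by (auto simp: zero_coords_subspace_def)
  then show ?thesis using unit_vec_nonzero[OF assms(1)] by blast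
qed

lemma zero_coords_subspace_proper:
  assumes "k < d" "k \<in> K"
  shows "zero_coords_subspace d K \<noteq> carrier_vec d"
proof -
  have "unit_vec d k \<notin> zero_coords_subspace d K"
    using assms by (auto simp: zero_coords_subspace_def)
  then show ?thesis using unit_vec_carrier by blast
qed

lemma mult_mat_vec_zero_coords_subspace:
  assumes A: "A \<in> carrier_mat d d"
    and block: "\<And>r c. r < d \<Longrightarrow> r \<in> K \<Longrightarrow> c < d \<Longrightarrow> c \<notin> K \<Longrightarrow> A $$ (r,c) = 0"
    and v: "v \<in> zero_coords_subspace d K"
  shows "A *\<^sub>v v \<in> zero_coords_subspace d K"
proof -
  have vc: "v \<in> carrier_vec d" and vK: "\<And>k. k < d \<Longrightarrow> k \<in> K \<Longrightarrow> v $ k = 0"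
    using v by (auto simp: zero_coords_subspace_def)
  have "(A *\<^sub>v v) $ r = 0" if "r \<in> K" "r < d" for r
  proof -
    have "(A *\<^sub>v v) $ r = (\<Sum>c\<in>{0..<d}. A $$ (r,c) * v $ c)"
      using A vc that by (simp add: scalar_prod_def del: upt_Suc)
    also have "\<dots> = 0"
      using block vK that by (intro sum.neutral) (metis atLeastLessThan_iff mult_eq_0_iff)
    finally show ?thesis .
  qed
  moreover have "A *\<^sub>v v \<in> carrier_vec d" using A vc by simp
  ultimately show ?thesis by (simp add: zero_coords_subspace_def)
qed

lemma rep_image_carrier: "A \<in> rep_image n M N \<Longrightarrow> A \<in> carrier_mat (n+1) (n+1)"
  by (induction rule: rep_image.induct) auto

lemma rep_image_preserves:
  assumes "A \<in> rep_image n M N" and "u \<in> U" and U: "U \<subseteq> carrier_vec (n+1)"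
    and gens: "\<And>i X u. 1 \<le> i \<Longrightarrow> i \<le> n - 1 \<Longrightarrow> X \<in> {M,N} \<Longrightarrow> u \<in> U \<Longrightarrow>
      local_mat n i X *\<^sub>v u \<in> U"
  shows "A *\<^sub>v u \<in> U"
  using assms(1,2)
proof (induction arbitrary: u rule: rep_image.induct)
  case one
  then show ?case using U by auto
next
  case (gen_s A i)
  then have "A * local_mat n i M *\<^sub>v u = A *\<^sub>v (local_mat n i M *\<^sub>v u)"
    using rep_image_carrier[OF gen_s.hyps(1)] U by (intro assoc_mult_mat_vec) auto
  then show ?case using gen_s gens by simp
next
  case (gen_rho A i)
  then have "A * local_mat n i N *\<^sub>v u = A *\<^sub>v (local_mat n i N *\<^sub>v u)"
    using rep_image_carrier[OF gen_rho.hyps(1)] U by (intro assoc_mult_mat_vec) auto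
  then show ?case using gen_rho gens by simp
qed

lemma homog_3local_rep_far_commute:
  assumes "homog_3local_rep n M N" and "X \<in> {M,N}" "Y \<in> {M,N}"
    and "1 \<le> i" "i + 2 \<le> j" "j \<le> n - 1"
  shows "local_mat n i X * local_mat n j Y = local_mat n j Y * local_mat n i X"
proof -
  have ij: "i \<in> {1..n-1}" "j \<in> {1..n-1}" "i + 2 \<le> j" using assms(4-6) by auto
  have "local_mat n i M * local_mat n j M = local_mat n j M * local_mat n i M"
    and "local_mat n i N * local_mat n j N = local_mat n j N * local_mat n i N"
    and "local_mat n i M * local_mat n j N = local_mat n j N * local_mat n i M"
    and "local_mat n j M * local_mat n i N = local_mat n i N * local_mat n j M"
    using assms(1) ij unfolding homog_3local_rep_def Let_def by (elim conjE; blast)+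
  then show ?thesis using assms(2,3) by auto
qed

lemma reducible_rep_if_zero_coords_invariant:
  assumes "k < n+1" "k \<in> K" "j < n+1" "j \<notin> K"
    and block: "\<And>i X r c. 1 \<le> i \<Longrightarrow> i \<le> n - 1 \<Longrightarrow> X \<in> {M,N} \<Longrightarrow> r < n+1 \<Longrightarrow> r \<in> K \<Longrightarrow>
      c < n+1 \<Longrightarrow> c \<notin> K \<Longrightarrow> local_mat n i X $$ (r,c) = 0"
  shows "reducible_rep n M N"
  unfolding reducible_rep_def
proof (intro exI conjI ballI)
  let ?U = "zero_coords_subspace (n+1) K"
  show "is_subspace (n+1) ?U" "?U \<noteq> {0\<^sub>v (n+1)}" "?U \<noteq> carrier_vec (n+1)"
    using assms is_subspace_zero_coords_subspace zero_coords_subspace_nonzero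
      zero_coords_subspace_proper by auto
  show "A *\<^sub>v u \<in> ?U" if "A \<in> rep_image n M N" "u \<in> ?U" for A u
    using that
  proof (rule rep_image_preserves)
    show "?U \<subseteq> carrier_vec (n+1)" by (auto simp: zero_coords_subspace_def)
    show "local_mat n i X *\<^sub>v v \<in> ?U" if "1 \<le> i" "i \<le> n - 1" "X \<in> {M,N}" "v \<in> ?U" for i X v
      by (rule mult_mat_vec_zero_coords_subspace[OF local_mat_carrier _ that(4)])
        (use that block in auto)
  qed
qed

theorem theorem4p3:
  fixes n :: nat and M N :: "complex mat"
  assumes "n \<ge> 4" and "homog_3local_rep n M N"
  shows "reducible_rep n M N"
proof -
  have overlap: "A $$ (a,2) * B $$ (0,b) = 0"
    if "A \<in> {M,N}" "B \<in> {M,N}" "a \<le> 1" "1 \<le> b" "b \<le> 2" for A B a b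
    using assms that
    by (intro commuting_local_mats_overlap[of 1 n a b A B] homog_3local_rep_far_commute) auto
  show ?thesis
  proof (cases "\<forall>X\<in>{M,N}. X $$ (0,2) = 0 \<and> X $$ (1,2) = 0")
    case True
    show ?thesis
      by (rule reducible_rep_if_zero_coords_invariant[of 0 n "{0..<n}" n])
        (use assms(1) True in \<open>auto simp: less_Suc_eq intro!: local_mat_last_col_zero\<close>)
  next
    case False
    then obtain A a where "A \<in> {M,N}" "a \<le> 1" "A $$ (a,2) \<noteq> 0"
      by (meson order_refl zero_le)
    then have "X $$ (0,1) = 0 \<and> X $$ (0,2) = 0" if "X \<in> {M,N}" for X
      using overlap[of A X a] that by auto
    then show ?thesis
      by (intro reducible_rep_if_zero_coords_invariant[of 0 n "{0}" 1])
        (use assms(1) local_mat_first_row_zero in auto)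
  qed
qed

end
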